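(* Let $X,X_1,X_2,\dots$ be i.i.d. real random variables with $EX=0$ and $E X^2<\infty$; let $S_n=X_1+\dots+X_n$, $\mu>0$, and $T_m=\inf\{n\ge0:S_n-\mu n>m\}$. Let $m\ge1$, $\delta\in(0,1/2]$, $\gamma>0$, $\alpha>1$ satisfy $$\text{(i)}\ \frac{E(X^2)}{m^{2(1-\delta)}}\le\frac12,\qquad \text{(ii)}\ \sup_{z\in\{\mu 2^{k}:k\ge0\}}\frac{6(1+2z+m)^{\alpha}P\big(X>(z+m)^{1-\delta}\big)}{(\alpha-1)(m+1)^{\alpha-1}\mu}\le1,$$ $$\text{(iii)}\ \sup_{z\in\{\mu 2^{k}:k\ge0\}}\frac{\exp\Big(-\gamma(m+z)^{\delta}+\frac{\gamma^2e^{\gamma}E(X^2)\,z}{(m+z)^{2(1-\delta)}\mu}+4\frac{z}{\mu}P\big(X>(z+m)^{1-\delta}\big)\Big)}{3^{-1}(\alpha-1)(m+1)^{\alpha-1}(1+2z+m)^{-\alpha}\,z}\le1.$$ For $k\ge2$ let $n_k=2^{k-1}$, $C_k=n_{k-1}\mu+m$, $\theta_k=\gamma/C_k^{1-\delta}$, $$\psi_k(\theta)=\log\frac{E\big[e^{\theta X}\mathbf 1(X\le C_k^{1-\delta})\big]}{P(X\le C_k^{1-\delta})},$$ $\bar G(t)=\int_t^\infty(1+s)^{-\alpha}ds$ and $g(k)=\big(\bar G(m+\mu n_{k-1})-\bar G(m+\mu n_k)\big)/\bar G(m+\mu n_1)$. Then for every $k\ge2$, on the event $\{T_m\in[n_{k-1},n_k-1]\}$,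 $$\frac{3\exp\big(-\theta_kS_{T_m}+T_m\psi_k(\theta_k)\big)}{g(k)}\le1.$$
   Context: $S_{T_m}$ is the undrifted sum $X_1+\dots+X_{T_m}$ evaluated at the first time the drifted walk $S_n-\mu n$ exceeds $m$. *)

theory Defs
  imports "HOL-Probability.Probability"
begin

definition psum :: "(nat \<Rightarrow> 'a \<Rightarrow> real) \<Rightarrow> nat \<Rightarrow> 'a \<Rightarrow> real" where
  "psum X n \<omega> = (\<Sum>i\<in>{1..n}. X i \<omega>)"

definition passage_time :: "(nat \<Rightarrow> 'a \<Rightarrow> real) \<Rightarrow> real \<Rightarrow> real \<Rightarrow> 'a \<Rightarrow> enat" where
  "passage_time X \<mu> m \<omega> =
     (if \<exists>n. psum X n \<omega> - \<mu> * real n > m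
      then enat (LEAST n. psum X n \<omega> - \<mu> * real n > m) else \<infinity>)"

definition nseq :: "nat \<Rightarrow> nat" where
  "nseq k = 2 ^ (k - 1)"

definition Gbar :: "real \<Rightarrow> real \<Rightarrow> real" where
  "Gbar \<alpha> t = (LINT s:{t..}|lborel. (1 + s) powr (- \<alpha>))"

end

theory Submission
  imports Defs
begin

text \<open>
  On the event T_m = t with n_(k-1) \<le> t < n_k the drifted walk has just crossed m, so
  S_t > m + \<mu> t \<ge> C_k and the tilt contributes at most -\<gamma> C_k^\<delta>. The inequality
  exp y \<le> 1 + y + y^2 exp g / 2 for y \<le> g, the centring E X = 0 and ln x \<le> x - 1 bound the
  truncated log-moment generating function by \<theta>_k^2 exp \<gamma> E X^2 / 2 + 2 P(X > C_k^(1-\<delta>)),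
  once Chebyshev and (i) make the truncated mass at least 1/2. As t < 2 n_(k-1), the whole
  exponent is at most the one in (iii). Finally Gbar \<alpha> s = (1 + s)^(1-\<alpha>) / (\<alpha> - 1), whence
  g(k) dominates the denominator of (iii).
\<close>

lemma has_integral_one_plus_powr:
  fixes \<alpha> a b :: real
  assumes "\<alpha> \<noteq> 1" "a > -1" "a \<le> b"
  shows "((\<lambda>s. (1 + s) powr - \<alpha>) has_integral
           ((1 + b) powr (1 - \<alpha>) - (1 + a) powr (1 - \<alpha>)) / (1 - \<alpha>)) {a..b}"
  unfolding diff_divide_distrib
proof (rule fundamental_theorem_of_calculus[OF assms(3)])
  fix x assume x: "x \<in> {a..b}"
  have "DERIV (\<lambda>s. (1 + s) powr (1 - \<alpha>)) x :> (1 - \<alpha>) * (1 + x) powr (1 - \<alpha> - of_nat 1) * 1"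
    using assms x by (intro DERIV_fun_powr) (auto intro!: derivative_eq_intros)
  then have "DERIV (\<lambda>s. (1 + s) powr (1 - \<alpha>) / (1 - \<alpha>)) x :> (1 + x) powr - \<alpha>"
    using DERIV_cdivide[where c = "1 - \<alpha>"] assms by fastforce
  then show "((\<lambda>s. (1 + s) powr (1 - \<alpha>) / (1 - \<alpha>)) has_vector_derivative (1 + x) powr - \<alpha>)
               (at x within {a..b})"
    by (simp add: has_field_derivative_at_within flip: has_real_derivative_iff_has_vector_derivative)
qed

lemma has_integral_one_plus_powr_to_inf:
  fixes \<alpha> t :: real
  assumes "\<alpha> > 1" "t > -1"
  shows "((\<lambda>s. (1 + s) powr - \<alpha>) has_integral (1 + t) powr (1 - \<alpha>) / (\<alpha> - 1)) {t..}"
proof (intro has_integral_to_inf integrable_continuous_interval continuous_intros)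
  define F where "F \<equiv> \<lambda>y::real. ((1 + y) powr (1 - \<alpha>) - (1 + t) powr (1 - \<alpha>)) / (1 - \<alpha>)"
  have "\<forall>\<^sub>F y in at_top. integral {t..y} (\<lambda>s. (1 + s) powr - \<alpha>) = F y"
    unfolding F_def using assms has_integral_one_plus_powr[of \<alpha> t]
    by (intro eventually_at_top_linorderI[of t] integral_unique) auto
  moreover have "((\<lambda>y. (1 + y) powr (1 - \<alpha>)) \<longlongrightarrow> 0) at_top"
    using assms by (intro tendsto_neg_powr filterlim_tendsto_add_at_top[OF tendsto_const filterlim_ident]) auto
  then have "(F \<longlongrightarrow> (0 - (1 + t) powr (1 - \<alpha>)) / (1 - \<alpha>)) at_top"
    unfolding F_def using assms by (intro tendsto_divide tendsto_diff tendsto_const) auto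
  moreover have "(0 - (1 + t) powr (1 - \<alpha>)) / (1 - \<alpha>) = (1 + t) powr (1 - \<alpha>) / (\<alpha> - 1)"
    by (simp add: minus_divide_right)
  ultimately show "((\<lambda>y. integral {t..y} (\<lambda>s. (1 + s) powr - \<alpha>))
      \<longlongrightarrow> (1 + t) powr (1 - \<alpha>) / (\<alpha> - 1)) at_top"
    by (simp add: filterlim_cong)
qed (use assms in auto)

lemma Gbar_eq:
  fixes \<alpha> t :: real
  assumes "\<alpha> > 1" "t > -1"
  shows "Gbar \<alpha> t = (1 + t) powr (1 - \<alpha>) / (\<alpha> - 1)"
proof -
  note hi = has_integral_one_plus_powr_to_inf[OF assms]
  have "(\<lambda>s. (1 + s) powr - \<alpha>) absolutely_integrable_on {t..}"
    using hi by (intro nonnegative_absolutely_integrable_1) (simp_all add: integrable_on_def exI)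
  then have "set_integrable lborel {t..} (\<lambda>s. (1 + s) powr - \<alpha>)"
    unfolding set_integrable_def by (subst (asm) integrable_completion) measurable
  then have "Gbar \<alpha> t = integral {t..} (\<lambda>s. (1 + s) powr - \<alpha>)"
    unfolding Gbar_def by (rule set_borel_integral_eq_integral(2))
  also have "\<dots> = (1 + t) powr (1 - \<alpha>) / (\<alpha> - 1)"
    using hi by (rule integral_unique)
  finally show ?thesis .
qed

lemma Gbar_diff_ge:
  fixes \<alpha> a b :: real
  assumes "\<alpha> > 1" "a > -1" "a \<le> b"
  shows "(b - a) * (1 + b) powr - \<alpha> \<le> Gbar \<alpha> a - Gbar \<alpha> b"
proof -
  have "Gbar \<alpha> a - Gbar \<alpha> b = ((1 + a) powr (1 - \<alpha>) - (1 + b) powr (1 - \<alpha>)) / (\<alpha> - 1)"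
    using assms by (simp add: Gbar_eq diff_divide_distrib)
  also have "\<dots> = ((1 + b) powr (1 - \<alpha>) - (1 + a) powr (1 - \<alpha>)) / (1 - \<alpha>)"
    by (metis minus_diff_eq minus_divide_divide)
  finally have "Gbar \<alpha> a - Gbar \<alpha> b = ((1 + b) powr (1 - \<alpha>) - (1 + a) powr (1 - \<alpha>)) / (1 - \<alpha>)" .
  then have int: "((\<lambda>s. (1 + s) powr - \<alpha>) has_integral Gbar \<alpha> a - Gbar \<alpha> b) {a..b}"
    using has_integral_one_plus_powr[of \<alpha> a b] assms by simp
  have const: "((\<lambda>s. (1 + b) powr - \<alpha>) has_integral (b - a) * (1 + b) powr - \<alpha>) {a..b}"
    using has_integral_const_real[of "(1 + b) powr - \<alpha>" a b] assms by simp
  show ?thesis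
    by (rule has_integral_le[OF const int]) (use assms in \<open>simp add: powr_mono2'\<close>)
qed

lemma Gbar_increment_ratio_ge:
  fixes \<alpha> m \<mu> z :: real
  assumes \<alpha>: "\<alpha> > 1" and "0 \<le> m" "0 \<le> \<mu>" "0 \<le> z"
  shows "(\<alpha> - 1) * (m + 1) powr (\<alpha> - 1) * (1 + 2 * z + m) powr - \<alpha> * z
         \<le> (Gbar \<alpha> (m + z) - Gbar \<alpha> (m + 2 * z)) / Gbar \<alpha> (m + \<mu>)"
proof -
  have num: "z * (1 + 2 * z + m) powr - \<alpha> \<le> Gbar \<alpha> (m + z) - Gbar \<alpha> (m + 2 * z)"
    using Gbar_diff_ge[OF \<alpha>, of "m + z" "m + 2 * z"] assms by (simp add: add_ac)
  have den: "Gbar \<alpha> (m + \<mu>) = (1 + (m + \<mu>)) powr (1 - \<alpha>) / (\<alpha> - 1)"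
    using Gbar_eq[OF \<alpha>, of "m + \<mu>"] assms by simp
  have den_le: "Gbar \<alpha> (m + \<mu>) \<le> (m + 1) powr (1 - \<alpha>) / (\<alpha> - 1)"
    unfolding den using assms by (intro divide_right_mono powr_mono2') auto
  have "(\<alpha> - 1) * (m + 1) powr (\<alpha> - 1) * (1 + 2 * z + m) powr - \<alpha> * z
      = z * (1 + 2 * z + m) powr - \<alpha> / ((m + 1) powr (1 - \<alpha>) / (\<alpha> - 1))"
  proof -
    have "(m + 1) powr (\<alpha> - 1) = 1 / (m + 1) powr (1 - \<alpha>)"
      using powr_minus_divide[of "m + 1" "1 - \<alpha>"] by simp
    moreover have "(m + 1) powr (1 - \<alpha>) > 0" using assms by simp
    ultimately show ?thesis using \<alpha> by (simp only:) (simp add: field_simps)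
  qed
  also have "\<dots> \<le> (Gbar \<alpha> (m + z) - Gbar \<alpha> (m + 2 * z)) / Gbar \<alpha> (m + \<mu>)"
  proof (rule frac_le)
    have "0 \<le> z * (1 + 2 * z + m) powr - \<alpha>" using assms by simp
    then show "0 \<le> Gbar \<alpha> (m + z) - Gbar \<alpha> (m + 2 * z)" using num by linarith
  qed (use num den den_le assms in auto)
  finally show ?thesis .
qed

lemma passage_time_eq_enatD:
  assumes "passage_time X \<mu> m \<omega> = enat t"
  shows "m < psum X t \<omega> - \<mu> * real t"
proof -
  have ex: "\<exists>n. m < psum X n \<omega> - \<mu> * real n"
    using assms by (auto simp: passage_time_def split: if_splits)
  then have "t = (LEAST n. m < psum X n \<omega> - \<mu> * real n)"
    using assms by (simp add: passage_time_def)
  with LeastI_ex[OF ex] show ?thesis by simp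
qed

definition trunc_log_mgf :: "'a measure \<Rightarrow> ('a \<Rightarrow> real) \<Rightarrow> real \<Rightarrow> real \<Rightarrow> real" where
  "trunc_log_mgf M Y c \<theta> =
     ln ((LINT \<omega>|M. exp (\<theta> * Y \<omega>) * indicator {\<omega>\<in>space M. Y \<omega> \<le> c} \<omega>)
         / measure M {\<omega>\<in>space M. Y \<omega> \<le> c})"

lemma exp_le_quadratic:
  fixes y g :: real
  assumes "y \<le> g" "0 \<le> g"
  shows "exp y \<le> 1 + y + y\<^sup>2 * exp g / 2"
proof (cases "y \<ge> 0")
  case True
  obtain t where t: "\<bar>t\<bar> \<le> \<bar>y\<bar>" "exp y = (\<Sum>m<2. y ^ m / fact m) + exp t / fact 2 * y ^ 2"
    using Maclaurin_exp_le[of y 2] by blast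
  have "exp t \<le> exp g" using t(1) True assms by auto
  then have "exp t / 2 * y\<^sup>2 \<le> exp g / 2 * y\<^sup>2" by (intro mult_right_mono) auto
  then show ?thesis using t(2) by (auto simp: eval_nat_numeral algebra_simps)
next
  case False
  obtain t where t: "exp y = (\<Sum>m<3. y ^ m / fact m) + exp t / fact 3 * y ^ 3"
    using Maclaurin_exp_le[of y 3] by blast
  have "y ^ 3 \<le> 0" using False mult_nonneg_nonpos[of "y * y" y] by (simp add: power3_eq_cube)
  then have "exp t / fact 3 * y ^ 3 \<le> 0" by (intro mult_nonneg_nonpos) auto
  moreover have "y\<^sup>2 / 2 \<le> y\<^sup>2 * exp g / 2"
    using assms mult_left_mono[of 1 "exp g" "y\<^sup>2"] by simp
  ultimately show ?thesis using t by (auto simp: eval_nat_numeral algebra_simps)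
qed

lemma ln_div_le:
  fixes a p B :: real
  assumes "0 < a" "1/2 \<le> p" "p \<le> 1" "a \<le> p + B"
  shows "ln (a / p) \<le> B + 2 * (1 - p)"
proof -
  have "ln a \<le> a - 1" using assms(1) by (rule ln_le_minus_one)
  moreover have "- ln p \<le> 1 / p - 1"
    using ln_le_minus_one[of "1 / p"] assms(2) by (simp add: ln_div)
  moreover have "1 / p - 1 \<le> 2 * (1 - p)"
  proof -
    have "(1 - p) * (1 / p) \<le> (1 - p) * 2"
      using assms(2,3) by (intro mult_left_mono) (auto simp: field_simps)
    then show ?thesis using assms(2) by (simp add: field_simps)
  qed
  ultimately show ?thesis using assms by (simp add: ln_div)
qed

context prob_space
begin

lemma prob_gt_le_second_moment:
  fixes Y :: "'a \<Rightarrow> real"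
  assumes "Y \<in> borel_measurable M" "integrable M (\<lambda>\<omega>. (Y \<omega>)\<^sup>2)" "c > 0"
  shows "prob {\<omega>\<in>space M. Y \<omega> > c} \<le> expectation (\<lambda>\<omega>. (Y \<omega>)\<^sup>2) / c\<^sup>2"
proof -
  have "prob {\<omega>\<in>space M. Y \<omega> > c} \<le> prob {\<omega>\<in>space M. \<bar>Y \<omega>\<bar> \<ge> c}"
    using assms by (intro finite_measure_mono) auto
  also have "\<dots> \<le> expectation (\<lambda>\<omega>. (Y \<omega>)\<^sup>2) / c\<^sup>2"
    using assms by (intro second_moment_method) auto
  finally show ?thesis .
qed

lemma truncated_mgf_le:
  fixes Y :: "'a \<Rightarrow> real"
  assumes [measurable]: "Y \<in> borel_measurable M"
    and Y_int: "integrable M Y" and "expectation Y = 0"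
    and Y2_int: "integrable M (\<lambda>\<omega>. (Y \<omega>)\<^sup>2)" and "0 \<le> c" "0 \<le> \<theta>"
  defines "A \<equiv> {\<omega>\<in>space M. Y \<omega> \<le> c}"
  shows "integrable M (\<lambda>\<omega>. exp (\<theta> * Y \<omega>) * indicator A \<omega>)"
    and "(LINT \<omega>|M. exp (\<theta> * Y \<omega>) * indicator A \<omega>)
           \<le> prob A + \<theta>\<^sup>2 * exp (\<theta> * c) * expectation (\<lambda>\<omega>. (Y \<omega>)\<^sup>2) / 2"
proof -
  define B where "B = {\<omega>\<in>space M. Y \<omega> > c}"
  have [measurable]: "A \<in> events" "B \<in> events" unfolding A_def B_def by measurable
  have bound: "\<theta> * Y \<omega> \<le> \<theta> * c" if "\<omega> \<in> A" for \<omega>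
    using that \<open>0 \<le> \<theta>\<close> by (auto simp: A_def intro: mult_left_mono)
  show int: "integrable M (\<lambda>\<omega>. exp (\<theta> * Y \<omega>) * indicator A \<omega>)"
  proof (rule integrable_const_bound[where B="exp (\<theta> * c)"])
    show "AE \<omega> in M. norm (exp (\<theta> * Y \<omega>) * indicator A \<omega>) \<le> exp (\<theta> * c)"
      using bound by (intro AE_I2) (simp add: indicator_def)
  qed measurable
  have intA: "integrable M (indicator A :: 'a \<Rightarrow> real)"
    by (intro integrable_real_indicator) (auto simp: less_top[symmetric])
  have intB: "integrable M (\<lambda>\<omega>. Y \<omega> * indicator B \<omega>)"
    using Y_int by (intro integrable_real_mult_indicator) auto
  have "(LINT \<omega>|M. exp (\<theta> * Y \<omega>) * indicator A \<omega>)
      \<le> (LINT \<omega>|M. indicator A \<omega> + \<theta> * (Y \<omega> - Y \<omega> * indicator B \<omega>) + \<theta>\<^sup>2 * exp (\<theta> * c) / 2 * (Y \<omega>)\<^sup>2)"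
  proof (rule integral_mono[OF int])
    fix \<omega> assume \<omega>: "\<omega> \<in> space M"
    show "exp (\<theta> * Y \<omega>) * indicator A \<omega>
        \<le> indicator A \<omega> + \<theta> * (Y \<omega> - Y \<omega> * indicator B \<omega>) + \<theta>\<^sup>2 * exp (\<theta> * c) / 2 * (Y \<omega>)\<^sup>2"
    proof (cases "\<omega> \<in> A")
      case True
      then have "\<omega> \<notin> B" by (auto simp: A_def B_def)
      moreover have "exp (\<theta> * Y \<omega>) \<le> 1 + \<theta> * Y \<omega> + \<theta>\<^sup>2 * exp (\<theta> * c) / 2 * (Y \<omega>)\<^sup>2"
        using exp_le_quadratic[OF bound[OF True]] \<open>0 \<le> c\<close> \<open>0 \<le> \<theta>\<close>
        by (simp add: power_mult_distrib mult_ac)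
      ultimately show ?thesis using True by simp
    next
      case False
      with \<omega> show ?thesis by (simp add: A_def B_def)
    qed
  qed (use Y_int Y2_int intA intB in simp)
  also have "\<dots> = prob A + \<theta> * (expectation Y - expectation (\<lambda>\<omega>. Y \<omega> * indicator B \<omega>))
                  + \<theta>\<^sup>2 * exp (\<theta> * c) / 2 * expectation (\<lambda>\<omega>. (Y \<omega>)\<^sup>2)"
    using Y_int Y2_int intA intB
    by (simp add: integral_add integral_diff Int_absorb2 sets.sets_into_space)
  also have "\<dots> \<le> prob A + \<theta>\<^sup>2 * exp (\<theta> * c) * expectation (\<lambda>\<omega>. (Y \<omega>)\<^sup>2) / 2"
  proof -
    have "0 \<le> expectation (\<lambda>\<omega>. Y \<omega> * indicator B \<omega>)"
      using \<open>0 \<le> c\<close> by (intro integral_nonneg_AE AE_I2) (auto simp: B_def indicator_def)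
    with \<open>0 \<le> \<theta>\<close> \<open>expectation Y = 0\<close> show ?thesis by (simp add: mult_nonneg_nonneg)
  qed
  finally show "(LINT \<omega>|M. exp (\<theta> * Y \<omega>) * indicator A \<omega>)
           \<le> prob A + \<theta>\<^sup>2 * exp (\<theta> * c) * expectation (\<lambda>\<omega>. (Y \<omega>)\<^sup>2) / 2" .
qed

lemma trunc_log_mgf_le:
  fixes Y :: "'a \<Rightarrow> real"
  assumes Y: "Y \<in> borel_measurable M" "integrable M Y" "expectation Y = 0"
      "integrable M (\<lambda>\<omega>. (Y \<omega>)\<^sup>2)"
    and "0 \<le> c" "0 \<le> \<theta>" and tail: "prob {\<omega>\<in>space M. Y \<omega> > c} \<le> 1/2"
  shows "trunc_log_mgf M Y c \<theta>
         \<le> \<theta>\<^sup>2 * exp (\<theta> * c) * expectation (\<lambda>\<omega>. (Y \<omega>)\<^sup>2) / 2 + 2 * prob {\<omega>\<in>space M. Y \<omega> > c}"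
proof -
  define A where "A = {\<omega>\<in>space M. Y \<omega> \<le> c}"
  define B where "B = {\<omega>\<in>space M. Y \<omega> > c}"
  have B: "B \<in> events" unfolding B_def using Y(1) by measurable
  have A: "A \<in> events" unfolding A_def using Y(1) by measurable
  have "A = space M - B" by (auto simp: A_def B_def)
  then have pA: "prob A = 1 - prob B" using prob_compl[OF B] by simp
  note mgf = truncated_mgf_le[OF Y \<open>0 \<le> c\<close> \<open>0 \<le> \<theta>\<close>, folded A_def]
  have "0 < (LINT \<omega>|M. exp (\<theta> * Y \<omega>) * indicator A \<omega>)"
  proof (rule ccontr)
    assume "\<not> 0 < (LINT \<omega>|M. exp (\<theta> * Y \<omega>) * indicator A \<omega>)"
    moreover have "0 \<le> (LINT \<omega>|M. exp (\<theta> * Y \<omega>) * indicator A \<omega>)"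
      by (intro integral_nonneg_AE AE_I2) simp
    ultimately have "AE \<omega> in M. exp (\<theta> * Y \<omega>) * indicator A \<omega> = 0"
      using integral_nonneg_eq_0_iff_AE[OF mgf(1)] by simp
    then have "AE \<omega> in M. \<omega> \<notin> A"
      by (rule AE_mp) (auto intro!: AE_I2 simp: indicator_def)
    then have "prob A = 0" using prob_eq_0[OF A] by simp
    then show False using pA tail by (simp add: B_def)
  qed
  then show ?thesis
    unfolding trunc_log_mgf_def A_def[symmetric] B_def[symmetric]
    using mgf(2) pA tail measure_le_1[of B] by (intro order.trans[OF ln_div_le]) (auto simp: B_def)
qed

lemma tilted_exponent_le:
  fixes Y :: "'a \<Rightarrow> real" and m \<delta> \<gamma> \<mu> z S t :: real
  assumes Y: "Y \<in> borel_measurable M" "integrable M Y" "expectation Y = 0"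
      "integrable M (\<lambda>\<omega>. (Y \<omega>)\<^sup>2)"
    and "1 \<le> m" "\<delta> \<le> 1" "0 < \<gamma>" "0 < \<mu>" "0 < z"
    and second_moment: "expectation (\<lambda>\<omega>. (Y \<omega>)\<^sup>2) / m powr (2 * (1 - \<delta>)) \<le> 1/2"
    and "m + z \<le> S" "0 \<le> t" "t \<le> 2 * (z / \<mu>)"
  defines "C \<equiv> m + z"
  defines "\<theta> \<equiv> \<gamma> / C powr (1 - \<delta>)"
  shows "- \<theta> * S + t * trunc_log_mgf M Y (C powr (1 - \<delta>)) \<theta>
         \<le> - \<gamma> * C powr \<delta>
            + \<gamma>\<^sup>2 * exp \<gamma> * expectation (\<lambda>\<omega>. (Y \<omega>)\<^sup>2) * z / (C powr (2 * (1 - \<delta>)) * \<mu>)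
            + 4 * (z / \<mu>) * prob {\<omega> \<in> space M. Y \<omega> > C powr (1 - \<delta>)}"
proof -
  define c where "c = C powr (1 - \<delta>)"
  define E2 where "E2 = expectation (\<lambda>\<omega>. (Y \<omega>)\<^sup>2)"
  define q where "q = prob {\<omega> \<in> space M. Y \<omega> > c}"
  have "0 < C" "m \<le> C" using assms by (simp_all add: C_def)
  then have "0 < c" "0 < \<theta>" "\<theta> * c = \<gamma>" using assms by (simp_all add: c_def \<theta>_def)
  have c2: "c\<^sup>2 = C powr (2 * (1 - \<delta>))"
    unfolding c_def by (simp add: power2_eq_square powr_add[symmetric])
  have "E2 \<ge> 0" unfolding E2_def by (intro integral_nonneg_AE AE_I2) auto
  have "q \<le> E2 / c\<^sup>2"
    unfolding q_def E2_def using Y(1,4) \<open>0 < c\<close> by (rule prob_gt_le_second_moment)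
  also have "\<dots> \<le> E2 / m powr (2 * (1 - \<delta>))"
    unfolding c2 using \<open>E2 \<ge> 0\<close> \<open>m \<le> C\<close> assms by (intro divide_left_mono powr_mono2) auto
  also have "\<dots> \<le> 1/2" using second_moment by (simp add: E2_def)
  finally have "q \<le> 1/2" .
  then have psi: "trunc_log_mgf M Y c \<theta> \<le> \<theta>\<^sup>2 * exp \<gamma> * E2 / 2 + 2 * q"
    using trunc_log_mgf_le[OF Y, of c \<theta>] \<open>0 < c\<close> \<open>0 < \<theta>\<close> \<open>\<theta> * c = \<gamma>\<close>
    by (simp add: E2_def q_def)
  have "\<theta> * C = \<gamma> * C powr \<delta>"
    using \<open>0 < C\<close> by (simp add: \<theta>_def field_simps powr_add[symmetric])
  then have part1: "- \<theta> * S \<le> - \<gamma> * C powr \<delta>"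
    using \<open>0 < \<theta>\<close> \<open>m + z \<le> S\<close> mult_left_mono[of C S \<theta>] by (simp add: C_def)
  have "t * trunc_log_mgf M Y c \<theta> \<le> t * (\<theta>\<^sup>2 * exp \<gamma> * E2 / 2 + 2 * q)"
    using psi \<open>0 \<le> t\<close> by (rule mult_left_mono)
  also have "\<dots> \<le> 2 * (z / \<mu>) * (\<theta>\<^sup>2 * exp \<gamma> * E2 / 2 + 2 * q)"
    using \<open>t \<le> 2 * (z / \<mu>)\<close> \<open>E2 \<ge> 0\<close> by (intro mult_right_mono) (simp_all add: q_def)
  also have "\<dots> = \<gamma>\<^sup>2 * exp \<gamma> * E2 * z / (C powr (2 * (1 - \<delta>)) * \<mu>) + 4 * (z / \<mu>) * q"
    using \<open>0 < C\<close> \<open>0 < \<mu>\<close> c2 by (simp add: \<theta>_def c_def[symmetric] power_divide field_simps)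
  finally show ?thesis
    using part1 by (simp add: c_def E2_def q_def)
qed

(* The k-th block, with z = \<mu> n_(k-1), so that C_k = m + z and n_k = 2 z / \<mu>. *)
lemma dyadic_block_bound:
  fixes Y :: "'a \<Rightarrow> real" and m \<delta> \<gamma> \<mu> \<alpha> z S t :: real
  assumes Y: "Y \<in> borel_measurable M" "integrable M Y" "expectation Y = 0"
      "integrable M (\<lambda>\<omega>. (Y \<omega>)\<^sup>2)"
    and "1 \<le> m" "\<delta> \<le> 1" "0 < \<gamma>" "0 < \<mu>" "1 < \<alpha>" "0 < z"
    and "expectation (\<lambda>\<omega>. (Y \<omega>)\<^sup>2) / m powr (2 * (1 - \<delta>)) \<le> 1/2"
    and iii: "exp (- \<gamma> * (m + z) powr \<delta>
            + \<gamma>\<^sup>2 * exp \<gamma> * expectation (\<lambda>\<omega>. (Y \<omega>)\<^sup>2) * z / ((m + z) powr (2 * (1 - \<delta>)) * \<mu>)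
            + 4 * (z / \<mu>) * prob {\<omega> \<in> space M. Y \<omega> > (z + m) powr (1 - \<delta>)})
       / (inverse 3 * (\<alpha> - 1) * (m + 1) powr (\<alpha> - 1) * (1 + 2 * z + m) powr (- \<alpha>) * z) \<le> 1"
    and "m + z \<le> S" "0 \<le> t" "t \<le> 2 * (z / \<mu>)"
  defines "\<theta> \<equiv> \<gamma> / (m + z) powr (1 - \<delta>)"
  shows "3 * exp (- \<theta> * S + t * trunc_log_mgf M Y ((m + z) powr (1 - \<delta>)) \<theta>)
         / ((Gbar \<alpha> (m + z) - Gbar \<alpha> (m + 2 * z)) / Gbar \<alpha> (m + \<mu>)) \<le> 1"
proof -
  define D where "D = (\<alpha> - 1) * (m + 1) powr (\<alpha> - 1) * (1 + 2 * z + m) powr - \<alpha> * z"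
  have "0 < D" using assms by (simp add: D_def)
  have "- \<theta> * S + t * trunc_log_mgf M Y ((m + z) powr (1 - \<delta>)) \<theta>
      \<le> - \<gamma> * (m + z) powr \<delta>
        + \<gamma>\<^sup>2 * exp \<gamma> * expectation (\<lambda>\<omega>. (Y \<omega>)\<^sup>2) * z / ((m + z) powr (2 * (1 - \<delta>)) * \<mu>)
        + 4 * (z / \<mu>) * prob {\<omega> \<in> space M. Y \<omega> > (z + m) powr (1 - \<delta>)}"
    using tilted_exponent_le[OF Y, of m \<delta> \<gamma> \<mu> z S t] assms by (simp add: add.commute[of z m])
  moreover have "3 * exp (- \<gamma> * (m + z) powr \<delta>
        + \<gamma>\<^sup>2 * exp \<gamma> * expectation (\<lambda>\<omega>. (Y \<omega>)\<^sup>2) * z / ((m + z) powr (2 * (1 - \<delta>)) * \<mu>)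
        + 4 * (z / \<mu>) * prob {\<omega> \<in> space M. Y \<omega> > (z + m) powr (1 - \<delta>)}) \<le> D"
    using iii \<open>0 < D\<close> by (simp add: D_def divide_le_eq)
  ultimately have "3 * exp (- \<theta> * S + t * trunc_log_mgf M Y ((m + z) powr (1 - \<delta>)) \<theta>) \<le> D"
    by (smt (verit) exp_le_cancel_iff)
  moreover have "D \<le> (Gbar \<alpha> (m + z) - Gbar \<alpha> (m + 2 * z)) / Gbar \<alpha> (m + \<mu>)"
    unfolding D_def using assms by (intro Gbar_increment_ratio_ge) auto
  ultimately show ?thesis using \<open>0 < D\<close> by (intro divide_le_eq_1_pos[THEN iffD2]) linarith+
qed

end

theorem lemma2:
  fixes M :: "'a measure" and X :: "nat \<Rightarrow> 'a \<Rightarrow> real"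
    and \<mu> m \<delta> \<gamma> \<alpha> :: real and k :: nat
  assumes P: "prob_space M"
    and rv: "\<And>i. X i \<in> borel_measurable M"
    and indep: "prob_space.indep_vars M (\<lambda>_. borel) X UNIV"
    and ident: "\<And>i. distr M borel (X i) = distr M borel (X 0)"
    and int1: "integrable M (X 0)"
    and mean0: "prob_space.expectation M (X 0) = 0"
    and int2: "integrable M (\<lambda>\<omega>. (X 0 \<omega>)\<^sup>2)"
    and mu: "\<mu> > 0"
    and m: "m \<ge> 1"
    and delta: "0 < \<delta>" "\<delta> \<le> 1/2"
    and gamma: "\<gamma> > 0"
    and alpha: "\<alpha> > 1"
    and i: "prob_space.expectation M (\<lambda>\<omega>. (X 0 \<omega>)\<^sup>2) / m powr (2 * (1 - \<delta>)) \<le> 1/2"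
    and ii: "\<forall>z\<in>{\<mu> * 2 ^ j | j. True}.
       6 * (1 + 2 * z + m) powr \<alpha> * measure M {\<omega> \<in> space M. X 0 \<omega> > (z + m) powr (1 - \<delta>)}
       / ((\<alpha> - 1) * (m + 1) powr (\<alpha> - 1) * \<mu>) \<le> 1"
    and iii: "\<forall>z\<in>{\<mu> * 2 ^ j | j. True}.
       exp (- \<gamma> * (m + z) powr \<delta>
            + \<gamma>\<^sup>2 * exp \<gamma> * prob_space.expectation M (\<lambda>\<omega>. (X 0 \<omega>)\<^sup>2) * z
              / ((m + z) powr (2 * (1 - \<delta>)) * \<mu>)
            + 4 * (z / \<mu>) * measure M {\<omega> \<in> space M. X 0 \<omega> > (z + m) powr (1 - \<delta>)})
       / (inverse 3 * (\<alpha> - 1) * (m + 1) powr (\<alpha> - 1) * (1 + 2 * z + m) powr (- \<alpha>) * z) \<le> 1"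
    and k: "k \<ge> 2"
  shows "\<forall>\<omega>\<in>space M. \<forall>t::nat.
           passage_time X \<mu> m \<omega> = enat t \<and> nseq (k - 1) \<le> t \<and> t \<le> nseq k - 1 \<longrightarrow>
           (let C = real (nseq (k - 1)) * \<mu> + m;
                \<theta> = \<gamma> / C powr (1 - \<delta>);
                \<psi> = (\<lambda>th. ln ((LINT \<omega>'|M. exp (th * X 0 \<omega>') * indicator {\<omega>'\<in>space M. X 0 \<omega>' \<le> C powr (1 - \<delta>)} \<omega>')
                              / measure M {\<omega>'\<in>space M. X 0 \<omega>' \<le> C powr (1 - \<delta>)}));
                g = (Gbar \<alpha> (m + \<mu> * real (nseq (k - 1))) - Gbar \<alpha> (m + \<mu> * real (nseq k)))
                    / Gbar \<alpha> (m + \<mu> * real (nseq 1))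
            in 3 * exp (- \<theta> * psum X t \<omega> + real t * \<psi> \<theta>) / g \<le> 1)"
proof -
  interpret prob_space M by (rule P)
  define z where "z = \<mu> * 2 ^ (k - 2)"
  have "k - 1 = Suc (k - 2)" using k by simp
  then have nseq: "real (nseq (k - 1)) * \<mu> = z" "\<mu> * real (nseq (k - 1)) = z"
      "\<mu> * real (nseq k) = 2 * z" "\<mu> * real (nseq 1) = \<mu>"
    by (simp_all add: nseq_def z_def)
  have "0 < z" using mu by (simp add: z_def)
  have "z \<in> {\<mu> * 2 ^ j | j. True}" unfolding z_def by blast
  note iii_z = bspec[OF iii this]
  have "3 * exp (- (\<gamma> / (m + z) powr (1 - \<delta>)) * psum X t \<omega>
        + real t * trunc_log_mgf M (X 0) ((m + z) powr (1 - \<delta>)) (\<gamma> / (m + z) powr (1 - \<delta>)))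
      / ((Gbar \<alpha> (m + z) - Gbar \<alpha> (m + 2 * z)) / Gbar \<alpha> (m + \<mu>)) \<le> 1"
    if "passage_time X \<mu> m \<omega> = enat t" "nseq (k - 1) \<le> t" "t \<le> nseq k - 1" for \<omega> t
  proof (rule dyadic_block_bound[OF rv int1 mean0 int2 m _ gamma mu alpha \<open>0 < z\<close> i iii_z])
    have "z \<le> \<mu> * real t" "real t \<le> 2 * (z / \<mu>)"
      using that mu nseq mult_left_mono[of "real (nseq (k - 1))" "real t" \<mu>]
      by (auto simp: field_simps simp flip: of_nat_le_iff)
    then show "m + z \<le> psum X t \<omega>" "real t \<le> 2 * (z / \<mu>)"
      using passage_time_eq_enatD[OF that(1)] by simp_all
  qed (use delta in simp_all)
  then show ?thesis
    unfolding Let_def trunc_log_mgf_def[symmetric] nseq add.commute[of z m] by blast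
qed

end
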